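(* Let $\beta\in(0,1/2^{|S|})$, $\varepsilon\in\left(0,\frac{\beta(1-\beta)}{L|S|^4}\right)$, let $q$ be an irreducible transition matrix on $S$ and $\widehat q$ a transition matrix that is $(\varepsilon,\beta)$-close to $q$. Let $C$ be a nonempty proper subset of $S$ and $s\in C$. Then for every $g\in G^\beta(C)$ one has $\mu_sq(g(s)\mid s)\ge\varepsilon\zeta_q$, and for every $g\in\widehat G^\beta(C)$ one has $\mu_s\widehat q(g(s)\mid s)\ge\varepsilon\zeta_q$.
   Context: $S$ is a finite set with $|S|\ge2$. Transition matrices have nonnegative entries with rows summing to 1; $q(D\mid s)=\sum_{t\in D}q(t\mid s)$, $\overline C=S\setminus C$. $\mu$ is the stationary distribution of the irreducible $q$. $\zeta_q=\min_{\emptyset\neq C\subsetneq S}\sum_{s\in C}\mu_sq(\overline C\mid s)$. $\widehat q$ is $(\varepsilon,\beta)$-close to $q$ if for all $s,t\in S$, $\left|1-\frac{\widehat q(t\mid s)}{q(t\mid s)}\right|\le\beta$ whenever $\mu_sq(t\mid s)\ge\varepsilon\zeta_q$ or $\mu_s\widehat q(t\mid s)\ge\varepsilon\zeta_q$ (the latter case requiring $q(t\mid s)>0$). $L=\sum_{n=1}^{|S|-1}\binom{|S|}{n}n^{|S|}$. A $C$-graph is a directed graph on $S$ without cycles in which each $s\in C$ has exactly one outgoing edge $(s,g(s))$ and states outside $C$ have none; $G(C)$ is the set of $C$-graphs. Weights: $p(g)=\prod_{s\in C}q(g(s)\mid s)$, $\widehat p(g)=\prod_{s\in C}\widehat q(g(s)\mid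 s)$. $G^\beta(C)=\{g\in G(C):p(g)\ge\beta\max_{g'\in G(C)}p(g')\}$ and $\widehat G^\beta(C)=\{g\in G(C):\widehat p(g)\ge\beta\max_{g'\in G(C)}\widehat p(g')\}$. *)

theory Defs
  imports Complex_Main
begin

text \<open>The finite state space S is the universe of a finite type 'a.
  A transition matrix q is a function with q s t = q(t | s).\<close>

definition transition_matrix :: "('a::finite \<Rightarrow> 'a \<Rightarrow> real) \<Rightarrow> bool" where
  "transition_matrix q \<longleftrightarrow> (\<forall>s t. 0 \<le> q s t) \<and> (\<forall>s. (\<Sum>t\<in>UNIV. q s t) = 1)"

definition irreducible :: "('a::finite \<Rightarrow> 'a \<Rightarrow> real) \<Rightarrow> bool" where
  "irreducible q \<longleftrightarrow> (\<forall>s t. (s, t) \<in> {(x, y). q x y > 0}\<^sup>+)"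

definition stationary :: "('a::finite \<Rightarrow> 'a \<Rightarrow> real) \<Rightarrow> ('a \<Rightarrow> real) \<Rightarrow> bool" where
  "stationary q \<mu> \<longleftrightarrow> (\<forall>s. 0 \<le> \<mu> s) \<and> (\<Sum>s\<in>UNIV. \<mu> s) = 1
     \<and> (\<forall>t. (\<Sum>s\<in>UNIV. \<mu> s * q s t) = \<mu> t)"

definition qset :: "('a::finite \<Rightarrow> 'a \<Rightarrow> real) \<Rightarrow> 'a set \<Rightarrow> 'a \<Rightarrow> real" where
  "qset q D s = (\<Sum>t\<in>D. q s t)"

definition zeta :: "('a::finite \<Rightarrow> 'a \<Rightarrow> real) \<Rightarrow> ('a \<Rightarrow> real) \<Rightarrow> real" where
  "zeta q \<mu> = Min ((\<lambda>C. \<Sum>s\<in>C. \<mu> s * qset q (- C) s) ` {C. C \<noteq> {} \<and> C \<noteq> UNIV})"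

definition close :: "real \<Rightarrow> real \<Rightarrow> ('a::finite \<Rightarrow> 'a \<Rightarrow> real) \<Rightarrow> ('a \<Rightarrow> real)
    \<Rightarrow> ('a \<Rightarrow> 'a \<Rightarrow> real) \<Rightarrow> bool" where
  "close \<epsilon> \<beta> q \<mu> qh \<longleftrightarrow> (\<forall>s t.
     (\<mu> s * q s t \<ge> \<epsilon> * zeta q \<mu> \<longrightarrow> \<bar>1 - qh s t / q s t\<bar> \<le> \<beta>) \<and>
     (\<mu> s * qh s t \<ge> \<epsilon> * zeta q \<mu> \<longrightarrow> q s t > 0 \<and> \<bar>1 - qh s t / q s t\<bar> \<le> \<beta>))"

definition L_const :: "nat \<Rightarrow> nat" where
  "L_const N = (\<Sum>n=1..N-1. (N choose n) * n ^ N)"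

text \<open>A C-graph: each s in C has the single edge (s, g s); states outside C have
  no outgoing edge (canonically g s = s there); the edge set is acyclic
  (in particular no self-loops).\<close>

definition Cgraphs :: "'a::finite set \<Rightarrow> ('a \<Rightarrow> 'a) set" where
  "Cgraphs C = {g. (\<forall>s. s \<notin> C \<longrightarrow> g s = s) \<and> acyclic {(s, g s) | s. s \<in> C}}"

definition gweight :: "('a::finite \<Rightarrow> 'a \<Rightarrow> real) \<Rightarrow> 'a set \<Rightarrow> ('a \<Rightarrow> 'a) \<Rightarrow> real" where
  "gweight q C g = (\<Prod>s\<in>C. q s (g s))"

definition Gbeta :: "real \<Rightarrow> ('a::finite \<Rightarrow> 'a \<Rightarrow> real) \<Rightarrow> 'a set \<Rightarrow> ('a \<Rightarrow> 'a) set" where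
  "Gbeta \<beta> q C = {g \<in> Cgraphs C. gweight q C g \<ge> \<beta> * Max (gweight q C ` Cgraphs C)}"

end

theory Submission
  imports Defs "HOL-Library.FuncSet"
begin

text \<open>
  By the Markov chain tree theorem, \<open>\<mu> s\<close> is proportional to the total weight of the spanning
  trees directed to \<open>s\<close>. Let \<open>g\<close> be a \<open>C\<close>-graph of nearly maximal weight and \<open>B\<close> the subtree of
  \<open>g\<close> hanging at \<open>s \<in> C\<close>. Grafting a heaviest \<open>B\<close>-graph onto \<open>g\<close> shows that \<open>g\<close> restricted to
  \<open>B\<close>, i.e. the edge \<open>(s, g s)\<close> followed by a forest on \<open>B - {s}\<close>, is nearly maximal among
  \<open>B\<close>-graphs. That forest combined with any \<open>-B\<close>-graph is a tree directed to \<open>s\<close>, whereas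
  \<open>\<zeta>\<close> is at most the flow out of \<open>B\<close>, which in tree weights is at most \<open>K = N (N - 1)^N \<le> L\<close>
  times the largest \<open>B\<close>-graph weight times the total weight of \<open>-B\<close>-graphs. Hence
  \<open>\<beta> \<zeta> \<le> K \<mu> s q s (g s)\<close>.

  For \<open>qh\<close> the same comparison is made by well-founded induction from the leaves of \<open>g\<close>
  towards \<open>s\<close>: the edges of \<open>g\<close> inside \<open>B - {s}\<close> are already known to be large, so there
  \<open>qh\<close> and \<open>q\<close> agree up to factors \<open>1 - \<beta>\<close> and \<open>1 + \<beta>\<close>, and the edges of a heaviest \<open>B\<close>-graph for
  \<open>q\<close> are large by the first part; a small edge at \<open>s\<close> then contradicts the bound on \<open>\<epsilon>\<close>.
\<close>

section \<open>\<open>C\<close>-graphs as functional graphs\<close>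

definition graph_edges :: "('a \<Rightarrow> 'a) \<Rightarrow> 'a set \<Rightarrow> ('a \<times> 'a) set" where
  "graph_edges g D = {(x, g x) | x. x \<in> D}"

lemma mem_graph_edges [simp]: "(x, y) \<in> graph_edges g D \<longleftrightarrow> x \<in> D \<and> y = g x"
  by (auto simp: graph_edges_def)

lemma graph_edges_fun_upd [simp]: "r \<notin> D \<Longrightarrow> graph_edges (g(r := v)) D = graph_edges g D"
  by (auto simp: graph_edges_def)

lemma graph_edges_mono: "D \<subseteq> D' \<Longrightarrow> graph_edges g D \<subseteq> graph_edges g D'"
  by auto

lemma Cgraphs_iff: "g \<in> Cgraphs D \<longleftrightarrow> (\<forall>x. x \<notin> D \<longrightarrow> g x = x) \<and> acyclic (graph_edges g D)"
  by (simp add: Cgraphs_def graph_edges_def)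

lemma Cgraphs_no_fixpoint: "g \<in> Cgraphs D \<Longrightarrow> x \<in> D \<Longrightarrow> g x \<noteq> x"
  unfolding Cgraphs_iff acyclic_def by (metis r_into_trancl' mem_graph_edges)

lemma card_Cgraphs_le: "card (Cgraphs (D::'a::finite set)) \<le> (card (UNIV::'a set) - 1) ^ card D"
proof -
  let ?P = "\<Pi>\<^sub>E x\<in>D. -{x}"
  have "inj_on (\<lambda>g. restrict g D) (Cgraphs D)"
  proof (rule inj_onI)
    fix g h assume "g \<in> Cgraphs D" "h \<in> Cgraphs D" "restrict g D = restrict h D"
    then show "g = h" unfolding Cgraphs_iff by (metis ext restrict_apply')
  qed
  moreover have "(\<lambda>g. restrict g D) ` Cgraphs D \<subseteq> ?P"
    using Cgraphs_no_fixpoint by fastforce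
  ultimately have "card (Cgraphs D) \<le> card ?P"
    by (meson card_inj_on_le finite_PiE finite)
  also have "card ?P = (card (UNIV::'a set) - 1) ^ card D"
    by (simp add: card_PiE Compl_eq_Diff_UNIV card_Diff_singleton)
  finally show ?thesis .
qed

lemma acyclic_Un:
  assumes "finite R" "finite S" "acyclic R" "acyclic S" "Domain S \<inter> Range R = {}"
  shows "acyclic (R \<union> S)"
proof -
  have "wf (S \<union> R)" using assms by (intro wf_Un finite_acyclic_wf)
  then show ?thesis by (simp add: wf_acyclic Un_commute)
qed

lemma acyclic_graph_edges_if_decreasing:
  assumes "\<And>x. x \<in> D \<Longrightarrow> d (g x) < (d x :: nat)"
  shows "acyclic (graph_edges g D)"
proof -
  have "graph_edges g D \<subseteq> (measure d)\<inverse>" using assms by auto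
  then show ?thesis by (meson acyclic_converse acyclic_subset wf_acyclic wf_measure)
qed

lemma graph_edges_rtrancl_funpow: "(x, y) \<in> (graph_edges g D)\<^sup>* \<Longrightarrow> \<exists>n. (g ^^ n) x = y"
proof (induction rule: rtrancl_induct)
  case base
  show ?case by (metis funpow_0)
next
  case (step y z)
  then obtain n where "(g ^^ n) x = y" by blast
  then have "(g ^^ Suc n) x = z" using step by simp
  then show ?case by blast
qed

lemma acyclic_graph_edges_rtrancl_root:
  fixes g :: "'a::finite \<Rightarrow> 'a"
  assumes "acyclic (graph_edges g (-{r}))"
  shows "(x, r) \<in> (graph_edges g (-{r}))\<^sup>*"
proof -
  have "wf ((graph_edges g (-{r}))\<inverse>)" using assms by (intro finite_acyclic_wf_converse) simp_all
  then show ?thesis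
  proof (induction x rule: wf_induct_rule)
    case (less x)
    show ?case
    proof (cases "x = r")
      case False
      then have "(g x, r) \<in> (graph_edges g (-{r}))\<^sup>*" using less[of "g x"] by simp
      then show ?thesis using False by (simp add: converse_rtrancl_into_rtrancl)
    qed simp
  qed
qed

lemma acyclic_graph_edges_root_iff:
  fixes g :: "'a::finite \<Rightarrow> 'a"
  shows "acyclic (graph_edges g (-{r})) \<longleftrightarrow> (\<forall>x. \<exists>n. (g ^^ n) x = r)"
proof
  show "\<forall>x. \<exists>n. (g ^^ n) x = r" if "acyclic (graph_edges g (-{r}))"
    using graph_edges_rtrancl_funpow[OF acyclic_graph_edges_rtrancl_root[OF that]] by blast
next
  assume reach: "\<forall>x. \<exists>n. (g ^^ n) x = r"
  define d where "d x = (LEAST n. (g ^^ n) x = r)" for x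
  have "d (g x) < d x" if "x \<in> -{r}" for x
  proof -
    have hit: "(g ^^ d x) x = r" unfolding d_def by (rule LeastI_ex) (use reach in blast)
    then have "d x \<noteq> 0" using that by (metis ComplD funpow_0 singletonI)
    then obtain k where k: "d x = Suc k" using not0_implies_Suc by blast
    then have "(g ^^ k) (g x) = r" using hit by (simp only: funpow_Suc_right comp_apply)
    then have "d (g x) \<le> k" unfolding d_def by (rule Least_le)
    then show ?thesis using k by simp
  qed
  then show "acyclic (graph_edges g (-{r}))" by (rule acyclic_graph_edges_if_decreasing)
qed

text \<open>The last hypothesis says that either no edge of \<open>a\<close> leaves \<open>B\<close> within \<open>D\<close> or no edge of \<open>b\<close>
  enters \<open>B\<close>, so no cycle can pass through both parts.\<close>

lemma override_on_in_Cgraphs: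
  fixes a b :: "'a::finite \<Rightarrow> 'a"
  assumes "B \<subseteq> D" "a \<in> Cgraphs B" "acyclic (graph_edges b (D - B))" "\<forall>x. x \<notin> D \<longrightarrow> b x = x"
    and "(\<forall>x\<in>B. a x \<notin> D - B) \<or> (\<forall>x\<in>D - B. b x \<notin> B)"
  shows "override_on b a B \<in> Cgraphs D"
proof -
  have edges: "graph_edges (override_on b a B) D = graph_edges a B \<union> graph_edges b (D - B)"
    using assms(1) by (auto simp: override_on_def split: if_split_asm)
  have acyc_a: "acyclic (graph_edges a B)" using assms(2) by (simp add: Cgraphs_iff)
  from assms(5) have "acyclic (graph_edges a B \<union> graph_edges b (D - B))"
  proof
    assume "\<forall>x\<in>B. a x \<notin> D - B"
    then show ?thesis using acyc_a assms(3) by (intro acyclic_Un) auto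
  next
    assume "\<forall>x\<in>D - B. b x \<notin> B"
    then have "acyclic (graph_edges b (D - B) \<union> graph_edges a B)"
      using acyc_a assms(3) by (intro acyclic_Un) auto
    then show ?thesis by (simp add: Un_commute)
  qed
  then show ?thesis using assms(1,4) edges by (auto simp: Cgraphs_iff override_on_def)
qed

abbreviation max_gweight :: "('a::finite \<Rightarrow> 'a \<Rightarrow> real) \<Rightarrow> 'a set \<Rightarrow> real" where
  "max_gweight q D \<equiv> Max (gweight q D ` Cgraphs D)"

lemma transition_matrix_nonneg: "transition_matrix q \<Longrightarrow> 0 \<le> q x y"
  by (simp add: transition_matrix_def)

lemma gweight_nonneg: "(\<And>x y. 0 \<le> q x y) \<Longrightarrow> 0 \<le> gweight q D g"
  unfolding gweight_def by (simp add: prod_nonneg)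

lemma gweight_pos:
  fixes g :: "'a::finite \<Rightarrow> 'a"
  shows "(\<And>x. x \<in> D \<Longrightarrow> 0 < q x (g x)) \<Longrightarrow> 0 < gweight q D g"
  unfolding gweight_def by (simp add: prod_pos)

lemma gweight_override_on:
  fixes g :: "'a::finite \<Rightarrow> 'a"
  shows "gweight q D (override_on f g B) = gweight q (D \<inter> B) g * gweight q (D - B) f"
  unfolding gweight_def by (subst prod.Int_Diff[where B = B]) auto

lemma gweight_split:
  fixes g :: "'a::finite \<Rightarrow> 'a"
  shows "gweight q D g = gweight q (D \<inter> B) g * gweight q (D - B) g"
  unfolding gweight_def by (rule prod.Int_Diff) simp

lemma gweight_fun_upd:
  fixes h :: "'a::finite \<Rightarrow> 'a"
  shows "gweight q UNIV (h(r := v)) = gweight q (-{r}) h * q r v"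
proof -
  have "gweight q UNIV (h(r := v)) = q r v * (\<Prod>x\<in>-{r}. q x ((h(r := v)) x))"
    unfolding gweight_def by (subst prod.remove[of UNIV r]) (auto simp: Compl_eq_Diff_UNIV)
  also have "(\<Prod>x\<in>-{r}. q x ((h(r := v)) x)) = gweight q (-{r}) h"
    unfolding gweight_def by (rule prod.cong) auto
  finally show ?thesis by (simp only: mult.commute)
qed

lemma gweight_le_max_gweight: "g \<in> Cgraphs D \<Longrightarrow> gweight q D g \<le> max_gweight q D"
  by simp

lemma Cgraphs_nonempty:
  assumes "D \<noteq> (UNIV::'a::finite set)"
  shows "Cgraphs D \<noteq> {}"
proof -
  obtain r where "r \<notin> D" using assms by blast
  then have "acyclic (graph_edges (override_on id (\<lambda>_. r) D) D)"
    by (intro acyclic_graph_edges_if_decreasing[where d = "\<lambda>x. if x \<in> D then 1 else 0"]) simp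
  then have "override_on id (\<lambda>_. r) D \<in> Cgraphs D" by (simp add: Cgraphs_iff)
  then show ?thesis by blast
qed

lemma max_gweight_attained:
  assumes "D \<noteq> (UNIV::'a::finite set)"
  obtains a where "a \<in> Cgraphs D" "gweight q D a = max_gweight q D"
  using Max_in[of "gweight q D ` Cgraphs D"] Cgraphs_nonempty[OF assms] by fastforce

lemma irreducible_backward_closed:
  assumes "irreducible q" and closed: "\<And>a b. 0 < q a b \<Longrightarrow> P b \<Longrightarrow> P a" and "P x"
  shows "P y"
proof -
  have "(y, x) \<in> {(a, b). 0 < q a b}\<^sup>+" using assms(1) by (simp add: irreducible_def)
  then show ?thesis
    by (induction rule: converse_trancl_induct) (use closed \<open>P x\<close> in blast)+
qed

lemma irreducible_exit_edge:
  assumes "irreducible q" "x \<in> C" "y \<notin> C"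
  shows "\<exists>a\<in>C. \<exists>b. b \<notin> C \<and> 0 < q a b"
proof (rule ccontr)
  assume "\<not> ?thesis"
  then have "\<And>a b. 0 < q a b \<Longrightarrow> b \<notin> C \<Longrightarrow> a \<notin> C" by blast
  then have "x \<notin> C" using irreducible_backward_closed[OF assms(1), of "\<lambda>z. z \<notin> C"] assms(3) by blast
  then show False using assms(2) by simp
qed

text \<open>Each state of \<open>D\<close> moves along a positive transition that decreases its distance to \<open>-D\<close>.\<close>

lemma exists_positive_Cgraph:
  fixes q :: "'a::finite \<Rightarrow> 'a \<Rightarrow> real"
  assumes "irreducible q" "D \<noteq> UNIV"
  shows "\<exists>g\<in>Cgraphs D. \<forall>x\<in>D. 0 < q x (g x)"
proof -
  define E where "E = {(x, y). 0 < q x y}"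
  obtain r where r: "r \<notin> D" using assms(2) by blast
  have "\<exists>n. \<exists>y. y \<notin> D \<and> (x, y) \<in> E ^^ n" for x
  proof -
    have "(x, r) \<in> E\<^sup>*" using assms(1) by (simp add: irreducible_def E_def trancl_into_rtrancl)
    then show ?thesis using r rtrancl_power by blast
  qed
  define d where "d x = (LEAST n. \<exists>y. y \<notin> D \<and> (x, y) \<in> E ^^ n)" for x
  have step: "\<exists>z. 0 < q x z \<and> d z < d x" if "x \<in> D" for x
  proof -
    obtain y where y: "y \<notin> D" "(x, y) \<in> E ^^ d x"
      using LeastI_ex[OF \<open>\<exists>n. \<exists>y. y \<notin> D \<and> (x, y) \<in> E ^^ n\<close>] unfolding d_def by blast
    then have "d x \<noteq> 0" using that by (metis relpow_0_E)
    then obtain k where k: "d x = Suc k" using not0_implies_Suc by blast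
    then obtain z where z: "(x, z) \<in> E" "(z, y) \<in> E ^^ k" using y(2) relpow_Suc_D2 by metis
    have "d z \<le> k" unfolding d_def using z(2) y(1) by (intro Least_le) blast
    then show ?thesis using z(1) k unfolding E_def by auto
  qed
  define g where "g x = (if x \<in> D then SOME z. 0 < q x z \<and> d z < d x else x)" for x
  have g: "0 < q x (g x) \<and> d (g x) < d x" if "x \<in> D" for x
    using someI_ex[OF step[OF that]] that unfolding g_def by simp
  then have "acyclic (graph_edges g D)"
    by (intro acyclic_graph_edges_if_decreasing[where d = d]) blast
  then have "g \<in> Cgraphs D" by (simp add: Cgraphs_iff g_def)
  then show ?thesis using g by blast
qed

lemma max_gweight_pos:
  assumes "irreducible q" "D \<noteq> UNIV"
  shows "0 < max_gweight q D"
proof -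
  obtain g where "g \<in> Cgraphs D" "\<forall>x\<in>D. 0 < q x (g x)"
    using exists_positive_Cgraph[OF assms] by blast
  then show ?thesis using gweight_pos gweight_le_max_gweight less_le_trans by metis
qed

section \<open>The Markov chain tree theorem\<close>

text \<open>The \<open>-{r}\<close>-graphs are the spanning trees directed to \<open>r\<close>.\<close>

definition tree_weight :: "('a::finite \<Rightarrow> 'a \<Rightarrow> real) \<Rightarrow> 'a \<Rightarrow> real" where
  "tree_weight q r = (\<Sum>h\<in>Cgraphs (-{r}). gweight q (-{r}) h)"

text \<open>A spanning tree directed to \<open>r\<close> together with an arbitrary edge out of \<open>r\<close>. Grouping these
  maps by their edge out of \<open>r\<close>, and alternatively by the predecessor of \<open>r\<close> on their unique
  cycle, shows that \<open>tree_weight q\<close> is stationary.\<close>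

definition rooted_maps :: "'a::finite \<Rightarrow> ('a \<Rightarrow> 'a) set" where
  "rooted_maps r = {f. acyclic (graph_edges f (-{r}))}"

lemma rooted_maps_iff: "f \<in> rooted_maps r \<longleftrightarrow> (\<forall>x. \<exists>n. (f ^^ n) x = r)"
  by (simp add: rooted_maps_def acyclic_graph_edges_root_iff)

lemma bij_betw_fun_upd_rooted_maps:
  "bij_betw (\<lambda>(h, v). h(r := v)) (Cgraphs (-{r}) \<times> V) {f \<in> rooted_maps r. f r \<in> V}"
proof (rule bij_betwI[where g = "\<lambda>f. (f(r := r), f r)"])
  show "(\<lambda>(h, v). h(r := v)) \<in> Cgraphs (-{r}) \<times> V \<rightarrow> {f \<in> rooted_maps r. f r \<in> V}"
    by (auto simp: rooted_maps_def Cgraphs_iff)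
  show "(\<lambda>f. (f(r := r), f r)) \<in> {f \<in> rooted_maps r. f r \<in> V} \<rightarrow> Cgraphs (-{r}) \<times> V"
    by (auto simp: rooted_maps_def Cgraphs_iff)
  show "(\<lambda>f. (f(r := r), f r)) ((\<lambda>(h, v). h(r := v)) p) = p" if "p \<in> Cgraphs (-{r}) \<times> V" for p
    using that by (auto simp: Cgraphs_iff)
  show "(\<lambda>(h, v). h(r := v)) ((\<lambda>f. (f(r := r), f r)) f) = f" for f
    by simp
qed

lemma tree_weight_mult_qset:
  "tree_weight q r * qset q V r = (\<Sum>f | f \<in> rooted_maps r \<and> f r \<in> V. gweight q UNIV f)"
proof -
  have "tree_weight q r * qset q V r = (\<Sum>(h, v)\<in>Cgraphs (-{r}) \<times> V. gweight q UNIV (h(r := v)))"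
    by (simp add: tree_weight_def qset_def gweight_fun_upd sum_product sum.cartesian_product)
  also have "\<dots> = (\<Sum>f | f \<in> rooted_maps r \<and> f r \<in> V. gweight q UNIV f)"
    using sum.reindex_bij_betw[OF bij_betw_fun_upd_rooted_maps, of "gweight q UNIV"]
    by (simp add: case_prod_unfold)
  finally show ?thesis .
qed

lemma rooted_maps_root_image: "f \<in> rooted_maps s \<Longrightarrow> f \<in> rooted_maps (f s)"
  unfolding rooted_maps_iff by (metis comp_apply funpow.simps(2))

lemma rooted_maps_ex_preimage:
  assumes "f \<in> rooted_maps t"
  shows "\<exists>s. f \<in> rooted_maps s \<and> f s = t"
proof -
  have reach: "\<forall>x. \<exists>n. (f ^^ n) x = t" using assms by (simp add: rooted_maps_iff)
  then obtain n where n: "(f ^^ n) (f t) = t" by blast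
  define s where "s = (f ^^ n) t"
  have "f s = t" using n by (simp add: s_def funpow_swap1)
  moreover have "(f ^^ (n + m)) x = s" if "(f ^^ m) x = t" for x m
    using that by (simp add: s_def funpow_add)
  then have "f \<in> rooted_maps s" using reach by (meson rooted_maps_iff)
  ultimately show ?thesis by blast
qed

text \<open>Along the orbit of \<open>t = f s\<close> the first visit to \<open>s\<close> closes the cycle through \<open>t\<close>,
  so no other preimage of \<open>t\<close> can be visited later.\<close>

lemma rooted_maps_preimage_unique:
  assumes "f \<in> rooted_maps s" "f \<in> rooted_maps s'" "f s = f s'"
  shows "s = s'"
proof -
  define t where "t = f s"
  have earlier: "\<exists>k<n. (f ^^ k) t = (f ^^ n) t" if "f u = t" "(f ^^ m) t = u" "m < n" for u m n
  proof -
    have "(f ^^ n) t = (f ^^ ((n - Suc m) + Suc m)) t"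
      using \<open>m < n\<close> by simp
    also have "\<dots> = (f ^^ (n - Suc m)) ((f ^^ Suc m) t)"
      by (simp only: funpow_add comp_apply)
    also have "(f ^^ Suc m) t = t" using that by simp
    finally show ?thesis using \<open>m < n\<close> by (intro exI[of _ "n - Suc m"]) simp
  qed
  have first_visit: "\<exists>m. (f ^^ m) t = u \<and> (\<forall>k<m. (f ^^ k) t \<noteq> u)" if "f \<in> rooted_maps u" for u
  proof -
    have "\<exists>m. (f ^^ m) t = u" using that by (simp add: rooted_maps_iff)
    then show ?thesis by (rule exists_least_iff[THEN iffD1])
  qed
  obtain m where m: "(f ^^ m) t = s" "\<forall>k<m. (f ^^ k) t \<noteq> s"
    using first_visit[OF assms(1)] by blast
  obtain n where n: "(f ^^ n) t = s'" "\<forall>k<n. (f ^^ k) t \<noteq> s'"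
    using first_visit[OF assms(2)] by blast
  have "\<not> m < n"
  proof
    assume "m < n"
    then obtain k where "k < n" "(f ^^ k) t = s'" using earlier[of s m n] m(1) n(1) t_def by auto
    then show False using n(2) by blast
  qed
  moreover have "\<not> n < m"
  proof
    assume "n < m"
    then obtain k where "k < m" "(f ^^ k) t = s" using earlier[of s' n m] m(1) n(1) t_def assms(3)
      by auto
    then show False using m(2) by blast
  qed
  ultimately have "m = n" by simp
  then show ?thesis using m(1) n(1) by simp
qed

lemma tree_weight_stationary:
  assumes "transition_matrix q"
  shows "(\<Sum>s\<in>UNIV. tree_weight q s * q s t) = tree_weight q t"
proof -
  have "q s t = qset q {t} s" for s by (simp add: qset_def)
  then have "(\<Sum>s\<in>UNIV. tree_weight q s * q s t)
      = (\<Sum>s\<in>UNIV. \<Sum>f | f \<in> rooted_maps s \<and> f s \<in> {t}. gweight q UNIV f)"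
    by (simp only: tree_weight_mult_qset)
  also have "\<dots> = (\<Sum>f \<in> (\<Union>s. {f. f \<in> rooted_maps s \<and> f s \<in> {t}}). gweight q UNIV f)"
    by (rule sum.UNION_disjoint[symmetric]) (auto dest: rooted_maps_preimage_unique)
  also have "(\<Union>s. {f. f \<in> rooted_maps s \<and> f s \<in> {t}}) = {f. f \<in> rooted_maps t \<and> f t \<in> UNIV}"
    by (auto dest: rooted_maps_root_image rooted_maps_ex_preimage)
  also have "(\<Sum>f | f \<in> rooted_maps t \<and> f t \<in> UNIV. gweight q UNIV f)
      = tree_weight q t * qset q UNIV t"
    by (rule tree_weight_mult_qset[symmetric])
  also have "\<dots> = tree_weight q t"
    using assms by (simp add: transition_matrix_def qset_def)
  finally show ?thesis .
qed

lemma stationary_pos: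
  assumes tm: "transition_matrix q" and irr: "irreducible q" and st: "stationary q \<mu>"
  shows "0 < \<mu> x"
proof (rule ccontr)
  have nonneg: "0 \<le> \<mu> y" for y using st by (simp add: stationary_def)
  have "\<mu> a = 0" if "0 < q a b" "\<mu> b = 0" for a b
  proof -
    have "\<mu> a * q a b \<le> (\<Sum>s\<in>UNIV. \<mu> s * q s b)"
      by (rule member_le_sum) (use nonneg transition_matrix_nonneg[OF tm] in auto)
    also have "\<dots> = 0" using st that(2) by (simp add: stationary_def)
    finally show ?thesis using that(1) nonneg[of a] by (simp add: mult_le_0_iff)
  qed
  moreover assume "\<not> 0 < \<mu> x"
  then have "\<mu> x = 0" using nonneg[of x] by simp
  ultimately have "\<mu> y = 0" for y by (rule irreducible_backward_closed[OF irr])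
  then show False using st by (simp add: stationary_def)
qed

text \<open>A maximal ratio \<open>w / \<mu>\<close> propagates backwards along positive transitions.\<close>

lemma stationary_unique:
  assumes tm: "transition_matrix q" and irr: "irreducible q" and st: "stationary q \<mu>"
    and w: "\<And>x. (\<Sum>y\<in>UNIV. w y * q y x) = w x"
  shows "w x = (\<Sum>y\<in>UNIV. w y) * \<mu> x"
proof -
  have pos: "0 < \<mu> y" for y using stationary_pos[OF tm irr st] .
  define m where "m = Max (range (\<lambda>y. w y / \<mu> y))"
  have le: "w y \<le> m * \<mu> y" for y
    using pos[of y] by (simp add: m_def flip: pos_divide_le_eq)
  have "m \<in> range (\<lambda>y. w y / \<mu> y)" unfolding m_def by (rule Max_in) auto
  then obtain y0 where "w y0 / \<mu> y0 = m" by auto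
  then have y0: "w y0 = m * \<mu> y0" using pos[of y0] by (simp add: divide_eq_eq)
  have "w a = m * \<mu> a" if "0 < q a b" "w b = m * \<mu> b" for a b
  proof -
    have "(\<Sum>y\<in>UNIV. (m * \<mu> y - w y) * q y b) = m * (\<Sum>y\<in>UNIV. \<mu> y * q y b) - (\<Sum>y\<in>UNIV. w y * q y b)"
      by (simp add: algebra_simps sum_subtractf sum_distrib_left)
    also have "\<dots> = 0" using st w that(2) by (simp add: stationary_def)
    finally have "(\<Sum>y\<in>UNIV. (m * \<mu> y - w y) * q y b) = 0" .
    moreover have "\<forall>y\<in>UNIV. 0 \<le> (m * \<mu> y - w y) * q y b"
      using le transition_matrix_nonneg[OF tm] by simp
    ultimately have "(m * \<mu> a - w a) * q a b = 0" by (simp add: sum_nonneg_eq_0_iff)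
    then show ?thesis using that(1) by simp
  qed
  then have all: "w y = m * \<mu> y" for y using y0 by (rule irreducible_backward_closed[OF irr])
  then have "(\<Sum>y\<in>UNIV. w y) = m * (\<Sum>y\<in>UNIV. \<mu> y)" by (simp add: sum_distrib_left)
  also have "\<dots> = m" using st by (simp add: stationary_def)
  finally show ?thesis using all by simp
qed

lemma tree_weight_pos:
  assumes "transition_matrix q" "irreducible q"
  shows "0 < tree_weight q r"
proof -
  obtain g where g: "g \<in> Cgraphs (-{r})" "\<forall>x\<in>-{r}. 0 < q x (g x)"
    using exists_positive_Cgraph[OF assms(2), of "-{r}"] by auto
  have "0 < gweight q (-{r}) g" using g(2) by (intro gweight_pos) auto
  also have "\<dots> \<le> tree_weight q r" unfolding tree_weight_def
    using g(1) gweight_nonneg[of q, OF transition_matrix_nonneg[OF assms(1)]]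
    by (intro member_le_sum) auto
  finally show ?thesis .
qed

theorem markov_chain_tree:
  assumes "transition_matrix q" "irreducible q" "stationary q \<mu>"
  shows "\<mu> x * (\<Sum>r\<in>UNIV. tree_weight q r) = tree_weight q x"
proof -
  have "tree_weight q x = (\<Sum>r\<in>UNIV. tree_weight q r) * \<mu> x"
    by (rule stationary_unique[OF assms tree_weight_stationary[OF assms(1)]])
  then show ?thesis by (simp only: mult.commute)
qed

section \<open>Subtrees of a \<open>C\<close>-graph\<close>

definition subtree :: "('a \<Rightarrow> 'a) \<Rightarrow> 'a set \<Rightarrow> 'a \<Rightarrow> 'a set" where
  "subtree g D s = {x. (x, s) \<in> (graph_edges g D)\<^sup>*}"

lemma graph_edges_rtrancl_outside: "(x, y) \<in> (graph_edges g D)\<^sup>* \<Longrightarrow> x \<notin> D \<Longrightarrow> y = x"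
  by (erule converse_rtranclE) auto

lemma self_in_subtree: "s \<in> subtree g D s"
  by (simp add: subtree_def)

lemma subtree_subset: "s \<in> D \<Longrightarrow> subtree g D s \<subseteq> D"
  unfolding subtree_def using graph_edges_rtrancl_outside by fastforce

lemma subtree_neq_UNIV: "s \<in> D \<Longrightarrow> D \<noteq> UNIV \<Longrightarrow> subtree g D s \<noteq> UNIV"
  using subtree_subset[of s D g] by blast

lemma subtree_trancl: "x \<in> subtree g D s - {s} \<Longrightarrow> (x, s) \<in> (graph_edges g D)\<^sup>+"
  by (auto simp: subtree_def rtrancl_eq_or_trancl)

lemma subtree_step: "x \<in> subtree g D s - {s} \<Longrightarrow> g x \<in> subtree g D s"
  unfolding subtree_def by (auto elim: converse_rtranclE)

lemma subtree_no_entry: "x \<in> D - subtree g D s \<Longrightarrow> g x \<notin> subtree g D s"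
  unfolding subtree_def by (auto intro: converse_rtrancl_into_rtrancl)

lemma subtree_forest_in_Cgraphs:
  assumes "g \<in> Cgraphs D" "s \<in> D"
  shows "override_on id g (subtree g D s - {s}) \<in> Cgraphs (subtree g D s - {s})"
proof -
  let ?F = "subtree g D s - {s}"
  have "graph_edges (override_on id g ?F) ?F \<subseteq> graph_edges g D"
    using subtree_subset[OF assms(2), of g] by auto
  then have "acyclic (graph_edges (override_on id g ?F) ?F)"
    using assms(1) unfolding Cgraphs_iff by (meson acyclic_subset)
  then show ?thesis by (simp add: Cgraphs_iff)
qed

lemma gweight_subtree:
  fixes g :: "'a::finite \<Rightarrow> 'a"
  shows "gweight p (subtree g D s) g
    = p s (g s) * gweight p (subtree g D s - {s}) (override_on id g (subtree g D s - {s}))"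
proof -
  let ?F = "subtree g D s - {s}"
  have "(\<Prod>x\<in>?F. p x (override_on id g ?F x)) = (\<Prod>x\<in>?F. p x (g x))"
    by (rule prod.cong) auto
  then show ?thesis unfolding gweight_def using self_in_subtree[of s g D] by (simp add: prod.remove)
qed

text \<open>Grafting a heavier graph onto the subtree at \<open>s\<close> gives another \<open>D\<close>-graph, so a graph
  of nearly maximal weight is nearly maximal on each of its subtrees.\<close>

lemma gweight_subtree_exchange:
  fixes g :: "'a::finite \<Rightarrow> 'a"
  assumes g: "g \<in> Cgraphs D" and "s \<in> D" and a: "a \<in> Cgraphs (subtree g D s)"
    and nonneg: "\<And>x y. 0 \<le> p x y" and "0 \<le> b"
    and pos: "0 < gweight p D g" and big: "b * max_gweight p D \<le> gweight p D g"
  shows "b * gweight p (subtree g D s) a \<le> gweight p (subtree g D s) g"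
proof -
  let ?B = "subtree g D s"
  let ?rest = "gweight p (D - ?B) g"
  have B: "?B \<subseteq> D" using subtree_subset[OF \<open>s \<in> D\<close>] .
  have "acyclic (graph_edges g (D - ?B))"
    using g unfolding Cgraphs_iff by (meson Diff_subset acyclic_subset graph_edges_mono)
  moreover have "\<forall>x\<in>D - ?B. g x \<notin> ?B" by (simp add: subtree_no_entry)
  ultimately have "override_on g a ?B \<in> Cgraphs D"
    using g by (intro override_on_in_Cgraphs[OF B a]) (auto simp: Cgraphs_iff)
  then have graft: "gweight p ?B a * ?rest \<le> max_gweight p D"
    using gweight_le_max_gweight gweight_override_on[of p D g a ?B] B by (metis Int_absorb1)
  have split: "gweight p D g = gweight p ?B g * ?rest"
    using gweight_split[of p D g ?B] B by (simp add: Int_absorb1)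
  then have "?rest \<noteq> 0" using pos by auto
  moreover have "0 \<le> ?rest" by (rule gweight_nonneg[OF nonneg])
  ultimately have rest: "0 < ?rest" by simp
  have "(b * gweight p ?B a) * ?rest = b * (gweight p ?B a * ?rest)" by (simp only: mult.assoc)
  also have "\<dots> \<le> b * max_gweight p D" using graft \<open>0 \<le> b\<close> by (rule mult_left_mono)
  also have "\<dots> \<le> gweight p ?B g * ?rest" using big split by simp
  finally show ?thesis using rest by (rule mult_right_le_imp_le)
qed

text \<open>\<open>tree_const N\<close> bounds \<open>card B\<close> times the number of \<open>B\<close>-graphs.\<close>

definition tree_const :: "nat \<Rightarrow> nat" where
  "tree_const n = n * (n - 1) ^ n"

lemma tree_const_le_L_const: "tree_const n \<le> L_const n"
proof (cases "2 \<le> n")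
  case True
  have "n choose (n - 1) = n choose 1" using True by (subst binomial_symmetric) auto
  then have "tree_const n = (n choose (n - 1)) * (n - 1) ^ n" by (simp add: tree_const_def)
  also have "\<dots> \<le> (\<Sum>k=1..n-1. (n choose k) * k ^ n)"
    by (rule member_le_sum[where f = "\<lambda>k. (n choose k) * k ^ n"]) (use True in auto)
  finally show ?thesis by (simp add: L_const_def)
next
  case False
  then have "n = 0 \<or> n = 1" by auto
  then show ?thesis by (auto simp: tree_const_def)
qed

lemma tree_const_pos: "2 \<le> n \<Longrightarrow> 0 < tree_const n"
  by (simp add: tree_const_def)

lemma power_close_to_one_bounds:
  fixes \<beta> :: real
  assumes "1 \<le> N" "0 < \<beta>" "\<beta> < 1 / 2 ^ N"
  shows "1 / 2 \<le> (1 - \<beta>) ^ N" "(1 + \<beta>) ^ N \<le> 2"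
proof -
  have "N \<le> 2 ^ (N - 1)" using less_exp[of "N - 1"] assms(1) by linarith
  moreover have "(2::nat) ^ N = 2 * 2 ^ (N - 1)" using assms(1) by (simp add: power_eq_if)
  ultimately have "real (2 * N) \<le> real (2 ^ N)" by (simp only: of_nat_le_iff)
  then have "\<beta> * (2 * real N) \<le> \<beta> * 2 ^ N" using assms(2) by (intro mult_left_mono) simp_all
  moreover have "\<beta> * 2 ^ N < 1" using assms(3) by (simp add: less_divide_eq)
  ultimately have "real N * \<beta> \<le> 1 / 2" by (simp add: algebra_simps)
  have "\<beta> * 1 \<le> \<beta> * 2 ^ N" using assms(2) by (intro mult_left_mono) simp_all
  then have "\<beta> < 1" using \<open>\<beta> * 2 ^ N < 1\<close> by simp
  have "1 + real N * (- \<beta>) \<le> (1 + (- \<beta>)) ^ N"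
    by (rule Bernoulli_inequality) (use \<open>\<beta> < 1\<close> in simp)
  then show lower: "1 / 2 \<le> (1 - \<beta>) ^ N" using \<open>real N * \<beta> \<le> 1 / 2\<close> by simp
  have "(1 + \<beta>) ^ N * (1 / 2) \<le> (1 + \<beta>) ^ N * (1 - \<beta>) ^ N"
    using lower assms(2) by (intro mult_left_mono) simp_all
  also have "\<dots> = (1 - \<beta> * \<beta>) ^ N" by (simp flip: power_mult_distrib add: algebra_simps)
  also have "\<dots> \<le> 1" using assms(2) \<open>\<beta> < 1\<close> by (intro power_le_one) (auto simp: mult_le_one)
  finally show "(1 + \<beta>) ^ N \<le> 2" by simp
qed

lemma close_constants:
  fixes \<beta> \<epsilon> :: real
  assumes "2 \<le> N" "0 < \<beta>" "\<beta> < 1 / 2 ^ N" "0 < \<epsilon>"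
    and "\<epsilon> < \<beta> * (1 - \<beta>) / (real (L_const N) * real N ^ 4)"
  shows "\<epsilon> * tree_const N * (1 + \<beta>) ^ N < \<beta> * (1 - \<beta>) ^ N"
proof -
  have K: "0 < real (tree_const N)" using tree_const_pos[OF assms(1)] by simp
  have L: "real (tree_const N) \<le> real (L_const N)" using tree_const_le_L_const[of N] by simp
  have "2 ^ 4 \<le> real N ^ 4" using assms(1) by (intro power_mono) simp_all
  then have N4: "16 \<le> real N ^ 4" by simp
  have bounds: "1 / 2 \<le> (1 - \<beta>) ^ N" "(1 + \<beta>) ^ N \<le> 2"
    using power_close_to_one_bounds[of N \<beta>] assms(1-3) by simp_all
  have "0 < real (L_const N) * real N ^ 4" using K L assms(1) by (intro mult_pos_pos) simp_all
  then have "\<epsilon> * (real (L_const N) * real N ^ 4) < \<beta> * (1 - \<beta>)"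
    using assms(5) by (simp add: less_divide_eq)
  moreover have "real (tree_const N) * 16 \<le> real (L_const N) * real N ^ 4"
    using L N4 K by (intro mult_mono) simp_all
  then have "\<epsilon> * tree_const N * 16 \<le> \<epsilon> * (real (L_const N) * real N ^ 4)"
    unfolding mult.assoc using assms(4) by (intro mult_left_mono) simp_all
  moreover have "\<beta> * (1 - \<beta>) \<le> \<beta>" using assms(2) by simp
  ultimately have "\<epsilon> * tree_const N * 16 < \<beta>" by linarith
  moreover have "\<epsilon> * tree_const N * (1 + \<beta>) ^ N \<le> \<epsilon> * tree_const N * 2"
    using bounds(2) K assms(4) by (intro mult_left_mono) simp_all
  moreover have "\<beta> * (1 / 2) \<le> \<beta> * (1 - \<beta>) ^ N"
    using bounds(1) assms(2) by (intro mult_left_mono) simp_all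
  ultimately show ?thesis using assms(2) by linarith
qed

section \<open>Tree weights bound \<open>\<zeta>\<close>\<close>

lemma rooted_map_split_Cgraphs:
  fixes f :: "'a::finite \<Rightarrow> 'a"
  assumes "f \<in> rooted_maps u" "u \<in> B" "f u \<notin> B"
  shows "override_on id f B \<in> Cgraphs B" "override_on id f (-B) \<in> Cgraphs (-B)"
proof -
  have acyc: "acyclic (graph_edges f (-{u}))" using assms(1) by (simp add: rooted_maps_def)
  have "(f u, u) \<notin> (graph_edges f (B - {u}))\<^sup>*"
  proof
    assume "(f u, u) \<in> (graph_edges f (B - {u}))\<^sup>*"
    then have "u = f u" by (rule graph_edges_rtrancl_outside) (use assms(3) in blast)
    then show False using assms(2,3) by simp
  qed
  moreover have "graph_edges f (B - {u}) \<subseteq> graph_edges f (-{u})" by auto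
  then have "acyclic (graph_edges f (B - {u}))" using acyc by (rule acyclic_subset[rotated])
  moreover have "graph_edges (override_on id f B) B = insert (u, f u) (graph_edges f (B - {u}))"
    using assms(2) by auto
  ultimately show "override_on id f B \<in> Cgraphs B" by (simp add: Cgraphs_iff)
  have "graph_edges (override_on id f (-B)) (-B) \<subseteq> graph_edges f (-{u})"
    using assms(2) by auto
  then have "acyclic (graph_edges (override_on id f (-B)) (-B))" using acyc
    by (rule acyclic_subset[rotated])
  then show "override_on id f (-B) \<in> Cgraphs (-B)" by (simp add: Cgraphs_iff)
qed

lemma inj_on_override_on_Cgraphs:
  "inj_on (\<lambda>(a, b). override_on b a B) (Cgraphs B \<times> Cgraphs (-B))"
proof (rule inj_onI, clarify)
  fix a b a' b'
  assume "a \<in> Cgraphs B" "b \<in> Cgraphs (-B)" "a' \<in> Cgraphs B" "b' \<in> Cgraphs (-B)"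
    and eq: "override_on b a B = override_on b' a' B"
  have "a x = a' x \<and> b x = b' x" for x
  proof (cases "x \<in> B")
    case True
    then show ?thesis using fun_cong[OF eq, of x] \<open>b \<in> Cgraphs (-B)\<close> \<open>b' \<in> Cgraphs (-B)\<close>
      by (simp add: Cgraphs_iff)
  next
    case False
    then show ?thesis using fun_cong[OF eq, of x] \<open>a \<in> Cgraphs B\<close> \<open>a' \<in> Cgraphs B\<close>
      by (simp add: Cgraphs_iff)
  qed
  then show "a = a' \<and> b = b'" by (simp add: fun_eq_iff)
qed

text \<open>A rooted map leaving \<open>B\<close> at its root splits into a \<open>B\<close>-graph and a \<open>-B\<close>-graph.\<close>

lemma tree_weight_exit_le:
  fixes q :: "'a::finite \<Rightarrow> 'a \<Rightarrow> real"
  assumes nonneg: "\<And>x y. 0 \<le> q x y" and "u \<in> B"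
  shows "tree_weight q u * qset q (-B) u
    \<le> (\<Sum>a\<in>Cgraphs B. gweight q B a) * (\<Sum>b\<in>Cgraphs (-B). gweight q (-B) b)"
proof -
  let ?glue = "\<lambda>(a, b). override_on b a B"
  have "{f. f \<in> rooted_maps u \<and> f u \<in> -B} \<subseteq> ?glue ` (Cgraphs B \<times> Cgraphs (-B))"
  proof
    fix f assume "f \<in> {f. f \<in> rooted_maps u \<and> f u \<in> -B}"
    then have "f \<in> rooted_maps u" "f u \<notin> B" by auto
    moreover have "f = ?glue (override_on id f B, override_on id f (-B))"
      by (simp add: override_on_def fun_eq_iff)
    ultimately show "f \<in> ?glue ` (Cgraphs B \<times> Cgraphs (-B))"
      using rooted_map_split_Cgraphs[OF _ \<open>u \<in> B\<close>] by blast
  qed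
  then have "(\<Sum>f | f \<in> rooted_maps u \<and> f u \<in> -B. gweight q UNIV f)
      \<le> (\<Sum>f \<in> ?glue ` (Cgraphs B \<times> Cgraphs (-B)). gweight q UNIV f)"
    using gweight_nonneg[OF nonneg] by (intro sum_mono2) simp_all
  also have "\<dots> = (\<Sum>p \<in> Cgraphs B \<times> Cgraphs (-B). gweight q UNIV (?glue p))"
    by (rule sum.reindex[OF inj_on_override_on_Cgraphs, unfolded comp_def])
  also have "\<dots> = (\<Sum>(a, b) \<in> Cgraphs B \<times> Cgraphs (-B). gweight q B a * gweight q (-B) b)"
    by (rule sum.cong) (auto simp: gweight_override_on Compl_eq_Diff_UNIV)
  also have "\<dots> = (\<Sum>a\<in>Cgraphs B. gweight q B a) * (\<Sum>b\<in>Cgraphs (-B). gweight q (-B) b)"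
    by (simp add: sum_product sum.cartesian_product)
  finally show ?thesis by (simp only: tree_weight_mult_qset)
qed

lemma forest_mult_le_tree_weight:
  fixes q :: "'a::finite \<Rightarrow> 'a \<Rightarrow> real"
  assumes nonneg: "\<And>x y. 0 \<le> q x y" and "s \<in> B"
    and t: "t \<in> Cgraphs (B - {s})" and into: "\<forall>x\<in>B - {s}. t x \<in> B"
  shows "gweight q (B - {s}) t * (\<Sum>b\<in>Cgraphs (-B). gweight q (-B) b) \<le> tree_weight q s"
proof -
  let ?glue = "\<lambda>b. override_on b t (B - {s})"
  have diff: "-{s} - (B - {s}) = -B" "-{s} \<inter> (B - {s}) = B - {s}" using \<open>s \<in> B\<close> by auto
  have glue: "?glue b \<in> Cgraphs (-{s})" if "b \<in> Cgraphs (-B)" for b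
  proof (rule override_on_in_Cgraphs[OF _ t])
    show "acyclic (graph_edges b (-{s} - (B - {s})))" "\<forall>x. x \<notin> -{s} \<longrightarrow> b x = x"
      using that \<open>s \<in> B\<close> by (auto simp: diff Cgraphs_iff)
    show "(\<forall>x\<in>B - {s}. t x \<notin> -{s} - (B - {s})) \<or> (\<forall>x\<in>-{s} - (B - {s}). b x \<notin> B - {s})"
      using into by (simp add: diff)
  qed auto
  have inj: "inj_on ?glue (Cgraphs (-B))"
  proof (rule inj_onI)
    fix b b' assume b: "b \<in> Cgraphs (-B)" "b' \<in> Cgraphs (-B)" and eq: "?glue b = ?glue b'"
    have "b x = b' x" for x
    proof (cases "x \<in> B")
      case True
      then show ?thesis using b by (simp add: Cgraphs_iff)
    next
      case False
      then show ?thesis using fun_cong[OF eq, of x] by simp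
    qed
    then show "b = b'" by (simp add: fun_eq_iff)
  qed
  have "gweight q (B - {s}) t * (\<Sum>b\<in>Cgraphs (-B). gweight q (-B) b)
      = (\<Sum>b\<in>Cgraphs (-B). gweight q (-{s}) (?glue b))"
    by (simp add: gweight_override_on diff sum_distrib_left)
  also have "\<dots> = (\<Sum>h \<in> ?glue ` Cgraphs (-B). gweight q (-{s}) h)"
    by (rule sum.reindex[OF inj, unfolded comp_def, symmetric])
  also have "\<dots> \<le> tree_weight q s" unfolding tree_weight_def
    using glue gweight_nonneg[OF nonneg] by (intro sum_mono2) auto
  finally show ?thesis .
qed

lemma zeta_le:
  assumes "B \<noteq> {}" "B \<noteq> UNIV"
  shows "zeta q \<mu> \<le> (\<Sum>u\<in>B. \<mu> u * qset q (-B) u)"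
  unfolding zeta_def by (rule Min_le) (use assms in auto)

lemma zeta_pos:
  fixes q :: "'a::finite \<Rightarrow> 'a \<Rightarrow> real" and C :: "'a set"
  assumes tm: "transition_matrix q" and irr: "irreducible q" and st: "stationary q \<mu>"
    and "C \<noteq> {}" "C \<noteq> UNIV"
  shows "0 < zeta q \<mu>"
proof -
  have "0 < (\<Sum>u\<in>B. \<mu> u * qset q (-B) u)" if B: "B \<noteq> {}" "B \<noteq> UNIV" for B
  proof -
    obtain x y where "x \<in> B" "y \<notin> B" using B by blast
    then obtain a b where ab: "a \<in> B" "b \<notin> B" "0 < q a b"
      using irreducible_exit_edge[OF irr, of x B y] by blast
    have nonneg: "0 \<le> \<mu> u * qset q (-B) u" for u
      using st transition_matrix_nonneg[OF tm] unfolding stationary_def qset_def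
      by (simp add: sum_nonneg)
    have "q a b \<le> qset q (-B) a" unfolding qset_def
      using ab(2) transition_matrix_nonneg[OF tm] by (intro member_le_sum) auto
    then have "0 < \<mu> a * qset q (-B) a"
      using ab(3) stationary_pos[OF tm irr st, of a] by (intro mult_pos_pos) auto
    also have "\<dots> \<le> (\<Sum>u\<in>B. \<mu> u * qset q (-B) u)"
      using ab(1) nonneg by (intro member_le_sum) auto
    finally show ?thesis .
  qed
  moreover have "{B::'a set. B \<noteq> {} \<and> B \<noteq> UNIV} \<noteq> {}" using assms(4,5) by blast
  ultimately show ?thesis unfolding zeta_def by (simp add: Min_gr_iff)
qed

lemma sum_gweight_le_max_gweight:
  fixes q :: "'a::finite \<Rightarrow> 'a \<Rightarrow> real"
  assumes nonneg: "\<And>x y. 0 \<le> q x y" and "B \<noteq> {}" "B \<noteq> UNIV"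
  shows "(\<Sum>a\<in>Cgraphs B. gweight q B a)
    \<le> real ((card (UNIV::'a set) - 1) ^ card (UNIV::'a set)) * max_gweight q B"
proof -
  let ?N = "card (UNIV::'a set)"
  obtain a where "gweight q B a = max_gweight q B"
    using max_gweight_attained[OF assms(3)] by blast
  moreover have "0 \<le> gweight q B a" by (rule gweight_nonneg[of q, OF nonneg])
  ultimately have max: "0 \<le> max_gweight q B" by simp
  have "(?N - 1) ^ card B \<le> (?N - 1) ^ ?N"
  proof (cases "?N - 1 = 0")
    case True
    have "0 < card B" using assms(2) by (simp add: card_gt_0_iff)
    then show ?thesis using True by (simp add: zero_power)
  next
    case False
    then show ?thesis by (intro power_increasing) (auto simp: card_mono)
  qed
  then have "card (Cgraphs B) \<le> (?N - 1) ^ ?N" using card_Cgraphs_le[of B] by linarith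
  then have "real (card (Cgraphs B)) * max_gweight q B \<le> real ((?N - 1) ^ ?N) * max_gweight q B"
    using max by (intro mult_right_mono) simp_all
  moreover have "(\<Sum>a\<in>Cgraphs B. gweight q B a) \<le> real (card (Cgraphs B)) * max_gweight q B"
    by (rule sum_bounded_above) simp
  ultimately show ?thesis by linarith
qed

lemma zeta_mult_sum_tree_weight_le:
  fixes q :: "'a::finite \<Rightarrow> 'a \<Rightarrow> real"
  assumes tm: "transition_matrix q" and irr: "irreducible q" and st: "stationary q \<mu>"
    and "B \<noteq> {}" "B \<noteq> UNIV"
  shows "zeta q \<mu> * (\<Sum>r\<in>UNIV. tree_weight q r)
    \<le> real (tree_const (card (UNIV::'a set))) * max_gweight q B
        * (\<Sum>b\<in>Cgraphs (-B). gweight q (-B) b)"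
proof -
  let ?N = "card (UNIV::'a set)"
  let ?Z = "\<Sum>r\<in>UNIV. tree_weight q r"
  let ?Y = "\<Sum>b\<in>Cgraphs (-B). gweight q (-B) b"
  let ?S = "\<Sum>a\<in>Cgraphs B. gweight q B a"
  have nonneg: "\<And>x y. 0 \<le> q x y" using transition_matrix_nonneg[OF tm] .
  have Z: "0 < ?Z" using tree_weight_pos[OF tm irr] by (simp add: sum_pos)
  have Y: "0 \<le> ?Y" using gweight_nonneg[of q, OF nonneg] by (simp add: sum_nonneg)
  have S: "0 \<le> ?S" using gweight_nonneg[of q, OF nonneg] by (simp add: sum_nonneg)
  have "zeta q \<mu> * ?Z \<le> (\<Sum>u\<in>B. \<mu> u * qset q (-B) u) * ?Z"
    using Z by (intro mult_right_mono[OF zeta_le[OF assms(4,5)]]) simp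
  also have "\<dots> = (\<Sum>u\<in>B. tree_weight q u * qset q (-B) u)"
    unfolding sum_distrib_right
  proof (rule sum.cong)
    show "\<mu> u * qset q (-B) u * ?Z = tree_weight q u * qset q (-B) u" for u
      using markov_chain_tree[OF tm irr st, of u] by (metis mult.assoc mult.commute)
  qed simp
  also have "\<dots> \<le> (\<Sum>u\<in>B. ?S * ?Y)"
    using tree_weight_exit_le[OF nonneg] by (rule sum_mono)
  also have "\<dots> = real (card B) * (?S * ?Y)" by simp
  also have "\<dots> \<le> real ?N * (real ((?N - 1) ^ ?N) * max_gweight q B * ?Y)"
  proof (rule mult_mono)
    show "real (card B) \<le> real ?N" by (simp add: card_mono)
    show "?S * ?Y \<le> real ((?N - 1) ^ ?N) * max_gweight q B * ?Y"
      using sum_gweight_le_max_gweight[OF nonneg assms(4,5)] Y by (rule mult_right_mono)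
  qed (use Y S in simp_all)
  also have "\<dots> = real (tree_const ?N) * max_gweight q B * ?Y"
    by (simp add: tree_const_def)
  finally show ?thesis .
qed

lemma zeta_mult_forest_le:
  fixes q :: "'a::finite \<Rightarrow> 'a \<Rightarrow> real"
  assumes tm: "transition_matrix q" and irr: "irreducible q" and st: "stationary q \<mu>"
    and "s \<in> B" "B \<noteq> UNIV" and t: "t \<in> Cgraphs (B - {s})" "\<forall>x\<in>B - {s}. t x \<in> B"
  shows "zeta q \<mu> * gweight q (B - {s}) t
    \<le> real (tree_const (card (UNIV::'a set))) * max_gweight q B * \<mu> s"
proof -
  let ?K = "real (tree_const (card (UNIV::'a set))) * max_gweight q B"
  let ?Z = "\<Sum>r\<in>UNIV. tree_weight q r"
  let ?Y = "\<Sum>b\<in>Cgraphs (-B). gweight q (-B) b"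
  have nonneg: "\<And>x y. 0 \<le> q x y" using transition_matrix_nonneg[OF tm] .
  have Z: "0 < ?Z" using tree_weight_pos[OF tm irr] by (simp add: sum_pos)
  have K: "0 \<le> ?K" using max_gweight_pos[OF irr \<open>B \<noteq> UNIV\<close>] by simp
  have "(zeta q \<mu> * gweight q (B - {s}) t) * ?Z = (zeta q \<mu> * ?Z) * gweight q (B - {s}) t"
    by (simp only: ac_simps)
  also have "\<dots> \<le> (?K * ?Y) * gweight q (B - {s}) t"
    using zeta_mult_sum_tree_weight_le[OF tm irr st _ \<open>B \<noteq> UNIV\<close>] \<open>s \<in> B\<close>
      gweight_nonneg[of q, OF nonneg]
    by (intro mult_right_mono) auto
  also have "\<dots> = ?K * (gweight q (B - {s}) t * ?Y)" by (simp only: ac_simps)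
  also have "\<dots> \<le> ?K * (\<mu> s * ?Z)"
    using forest_mult_le_tree_weight[OF nonneg \<open>s \<in> B\<close> t] markov_chain_tree[OF tm irr st, of s] K
    by (intro mult_left_mono) simp_all
  finally show ?thesis using Z by (simp add: ac_simps)
qed

lemma zeta_mult_subtree_le:
  fixes q :: "'a::finite \<Rightarrow> 'a \<Rightarrow> real"
  assumes tm: "transition_matrix q" and irr: "irreducible q" and st: "stationary q \<mu>"
    and g: "g \<in> Cgraphs D" and "s \<in> D" "D \<noteq> UNIV"
  shows "zeta q \<mu> * gweight q (subtree g D s - {s}) (override_on id g (subtree g D s - {s}))
    \<le> real (tree_const (card (UNIV::'a set))) * max_gweight q (subtree g D s) * \<mu> s"
proof (rule zeta_mult_forest_le[OF tm irr st self_in_subtree _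
      subtree_forest_in_Cgraphs[OF g \<open>s \<in> D\<close>]])
  show "subtree g D s \<noteq> UNIV" using \<open>s \<in> D\<close> \<open>D \<noteq> UNIV\<close> by (rule subtree_neq_UNIV)
  show "\<forall>x\<in>subtree g D s - {s}. override_on id g (subtree g D s - {s}) x \<in> subtree g D s"
    using subtree_step[of _ g D s] by simp
qed

section \<open>Edges of nearly maximal \<open>C\<close>-graphs\<close>

lemma Gbeta_edge_lower:
  fixes q :: "'a::finite \<Rightarrow> 'a \<Rightarrow> real"
  assumes tm: "transition_matrix q" and irr: "irreducible q" and st: "stationary q \<mu>"
    and "C \<noteq> UNIV" and g: "g \<in> Gbeta b q C" and "s \<in> C" and "0 < b"
  shows "b * zeta q \<mu> \<le> real (tree_const (card (UNIV::'a set))) * (\<mu> s * q s (g s))"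
proof -
  let ?K = "real (tree_const (card (UNIV::'a set)))"
  let ?B = "subtree g C s"
  let ?t = "override_on id g (?B - {s})"
  have nonneg: "\<And>x y. 0 \<le> q x y" using transition_matrix_nonneg[OF tm] .
  have gC: "g \<in> Cgraphs C" and big: "b * max_gweight q C \<le> gweight q C g"
    using g by (simp_all add: Gbeta_def)
  have B: "?B \<noteq> UNIV" using \<open>s \<in> C\<close> \<open>C \<noteq> UNIV\<close> by (rule subtree_neq_UNIV)
  obtain a where a: "a \<in> Cgraphs ?B" "gweight q ?B a = max_gweight q ?B"
    using max_gweight_attained[OF B] by blast
  have "0 < b * max_gweight q C" using \<open>0 < b\<close> max_gweight_pos[OF irr \<open>C \<noteq> UNIV\<close>] by simp
  then have pos: "0 < gweight q C g" using big by linarith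
  have exchange: "b * max_gweight q ?B \<le> q s (g s) * gweight q (?B - {s}) ?t"
    using gweight_subtree_exchange[where p = q, OF gC \<open>s \<in> C\<close> a(1) nonneg _ pos big] \<open>0 < b\<close> a(2)
    by (simp add: gweight_subtree)
  have forest: "zeta q \<mu> * gweight q (?B - {s}) ?t \<le> ?K * max_gweight q ?B * \<mu> s"
    by (rule zeta_mult_subtree_le[OF tm irr st gC \<open>s \<in> C\<close> \<open>C \<noteq> UNIV\<close>])
  have "C \<noteq> {}" using \<open>s \<in> C\<close> by blast
  then have zeta: "0 \<le> zeta q \<mu>" using zeta_pos[OF tm irr st _ \<open>C \<noteq> UNIV\<close>]
    by (simp add: less_imp_le)
  have "(b * zeta q \<mu>) * max_gweight q ?B = zeta q \<mu> * (b * max_gweight q ?B)"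
    by (simp only: ac_simps)
  also have "\<dots> \<le> zeta q \<mu> * (q s (g s) * gweight q (?B - {s}) ?t)"
    using exchange zeta by (rule mult_left_mono)
  also have "\<dots> = q s (g s) * (zeta q \<mu> * gweight q (?B - {s}) ?t)" by (simp only: ac_simps)
  also have "\<dots> \<le> q s (g s) * (?K * max_gweight q ?B * \<mu> s)"
    using forest nonneg by (rule mult_left_mono)
  also have "\<dots> = (?K * (\<mu> s * q s (g s))) * max_gweight q ?B" by (simp only: ac_simps)
  finally show ?thesis using max_gweight_pos[OF irr B] by (rule mult_right_le_imp_le)
qed

lemma close_lower_bound:
  assumes "close \<epsilon> \<beta> q \<mu> qh" "0 < \<epsilon> * zeta q \<mu>" "0 \<le> \<mu> x" "\<epsilon> * zeta q \<mu> \<le> \<mu> x * q x y"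
  shows "(1 - \<beta>) * q x y \<le> qh x y"
proof -
  have "\<bar>1 - qh x y / q x y\<bar> \<le> \<beta>" using assms(1,4) by (simp add: close_def)
  then have "1 - \<beta> \<le> qh x y / q x y" by linarith
  moreover have "0 < \<mu> x * q x y" using assms(2,4) by linarith
  then have "0 < q x y" using assms(3) by (simp add: zero_less_mult_iff)
  ultimately show ?thesis by (simp add: le_divide_eq)
qed

lemma close_upper_bound:
  assumes "close \<epsilon> \<beta> q \<mu> qh" "\<epsilon> * zeta q \<mu> \<le> \<mu> x * qh x y"
  shows "qh x y \<le> (1 + \<beta>) * q x y"
proof -
  have "0 < q x y" "\<bar>1 - qh x y / q x y\<bar> \<le> \<beta>" using assms by (simp_all add: close_def)
  moreover from this(2) have "qh x y / q x y \<le> 1 + \<beta>" by linarith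
  ultimately show ?thesis by (simp add: divide_le_eq)
qed

text \<open>The hypotheses on \<open>\<beta>\<close> and \<open>\<epsilon>\<close> enter only through \<open>small\<close>, which lemma \<open>close_constants\<close>
  derives from them.\<close>

context
  fixes q qh :: "'a::finite \<Rightarrow> 'a \<Rightarrow> real" and \<mu> :: "'a \<Rightarrow> real" and \<beta> \<epsilon> :: real
  assumes tm: "transition_matrix q" and irr: "irreducible q" and st: "stationary q \<mu>"
    and tmh: "transition_matrix qh" and cl: "close \<epsilon> \<beta> q \<mu> qh"
    and N: "2 \<le> card (UNIV::'a set)" and \<beta>: "0 < \<beta>" "\<beta> < 1" and \<epsilon>: "0 < \<epsilon>"
    and small: "\<epsilon> * tree_const (card (UNIV::'a set)) * (1 + \<beta>) ^ card (UNIV::'a set)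
      < \<beta> * (1 - \<beta>) ^ card (UNIV::'a set)"
begin

lemma eps_tree_const_less: "\<epsilon> * tree_const (card (UNIV::'a set)) < \<beta>"
proof -
  let ?N = "card (UNIV::'a set)"
  have "\<epsilon> * tree_const ?N * 1 \<le> \<epsilon> * tree_const ?N * (1 + \<beta>) ^ ?N"
    using \<beta>(1) \<epsilon> by (intro mult_left_mono) simp_all
  moreover have "\<beta> * (1 - \<beta>) ^ ?N \<le> \<beta> * 1"
    using \<beta> by (intro mult_left_mono power_le_one) simp_all
  ultimately show ?thesis using small by simp
qed

lemma Gbeta_edge_large:
  assumes "C \<noteq> UNIV" "g \<in> Gbeta b q C" "s \<in> C" "\<beta> \<le> b"
  shows "\<epsilon> * zeta q \<mu> \<le> \<mu> s * q s (g s)"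
proof -
  let ?K = "real (tree_const (card (UNIV::'a set)))"
  have "C \<noteq> {}" using assms(3) by blast
  have "(\<epsilon> * zeta q \<mu>) * ?K = (\<epsilon> * ?K) * zeta q \<mu>" by (simp only: ac_simps)
  also have "\<dots> \<le> b * zeta q \<mu>"
    using eps_tree_const_less assms(4) zeta_pos[OF tm irr st \<open>C \<noteq> {}\<close> assms(1)]
    by (intro mult_right_mono) simp_all
  also have "\<dots> \<le> ?K * (\<mu> s * q s (g s))"
    using Gbeta_edge_lower[OF tm irr st assms(1-3)] assms(4) \<beta>(1) by simp
  finally show ?thesis using tree_const_pos[OF N] by (simp add: mult.commute)
qed

lemma max_Cgraph_edge_large:
  assumes "D \<noteq> UNIV" "a \<in> Cgraphs D" "gweight q D a = max_gweight q D" "x \<in> D"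
  shows "\<epsilon> * zeta q \<mu> \<le> \<mu> x * q x (a x)"
  using assms \<beta>(2) by (intro Gbeta_edge_large[where b = 1]) (simp_all add: Gbeta_def)

lemma gweight_close_max_lower:
  assumes "D \<noteq> UNIV" "a \<in> Cgraphs D" "gweight q D a = max_gweight q D"
  shows "(1 - \<beta>) ^ card (UNIV::'a set) * max_gweight q D \<le> gweight qh D a"
proof -
  have "(1 - \<beta>) ^ card (UNIV::'a set) * max_gweight q D \<le> (1 - \<beta>) ^ card D * max_gweight q D"
    using \<beta> max_gweight_pos[OF irr assms(1)]
    by (intro mult_right_mono power_decreasing) (simp_all add: card_mono)
  also have "\<dots> = (\<Prod>x\<in>D. (1 - \<beta>) * q x (a x))"
    using assms(3) by (simp add: gweight_def prod.distrib)
  also have "\<dots> \<le> gweight qh D a" unfolding gweight_def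
  proof (rule prod_mono)
    fix x assume "x \<in> D"
    have "D \<noteq> {}" using \<open>x \<in> D\<close> by blast
    then have "0 < \<epsilon> * zeta q \<mu>" using \<epsilon> zeta_pos[OF tm irr st _ assms(1)] by simp
    then show "0 \<le> (1 - \<beta>) * q x (a x) \<and> (1 - \<beta>) * q x (a x) \<le> qh x (a x)"
      using close_lower_bound[OF cl _ _ max_Cgraph_edge_large[OF assms \<open>x \<in> D\<close>]] \<beta>(2)
        transition_matrix_nonneg[OF tm] st by (simp add: stationary_def)
  qed
  finally show ?thesis .
qed

lemma gweight_close_upper:
  assumes "\<forall>x\<in>F. \<epsilon> * zeta q \<mu> \<le> \<mu> x * qh x (t x)"
  shows "gweight qh F t \<le> (1 + \<beta>) ^ card (UNIV::'a set) * gweight q F t"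
proof -
  have "gweight qh F t \<le> (\<Prod>x\<in>F. (1 + \<beta>) * q x (t x))" unfolding gweight_def
    using assms close_upper_bound[OF cl] transition_matrix_nonneg[OF tmh] by (intro prod_mono) simp
  also have "\<dots> = (1 + \<beta>) ^ card F * gweight q F t" by (simp add: gweight_def prod.distrib)
  also have "\<dots> \<le> (1 + \<beta>) ^ card (UNIV::'a set) * gweight q F t"
    using \<beta> gweight_nonneg[of q, OF transition_matrix_nonneg[OF tm]]
    by (intro mult_right_mono power_increasing) (simp_all add: card_mono)
  finally show ?thesis .
qed

lemma max_gweight_close_pos:
  assumes "D \<noteq> UNIV"
  shows "0 < max_gweight qh D"
proof -
  obtain a where a: "a \<in> Cgraphs D" "gweight q D a = max_gweight q D"
    using max_gweight_attained[OF assms] by blast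
  have "0 < (1 - \<beta>) ^ card (UNIV::'a set) * max_gweight q D"
    using \<beta>(2) max_gweight_pos[OF irr assms] by simp
  also have "\<dots> \<le> gweight qh D a" by (rule gweight_close_max_lower[OF assms a])
  also have "\<dots> \<le> max_gweight qh D" using a(1) by (rule gweight_le_max_gweight)
  finally show ?thesis .
qed

lemma gweight_close_subtree_le:
  assumes "C \<noteq> UNIV" and g: "g \<in> Gbeta \<beta> qh C" and "s \<in> C"
    and upstream: "\<forall>x\<in>subtree g C s - {s}. \<epsilon> * zeta q \<mu> \<le> \<mu> x * qh x (g x)"
  shows "\<beta> * ((1 - \<beta>) ^ card (UNIV::'a set) * max_gweight q (subtree g C s))
    \<le> qh s (g s) * ((1 + \<beta>) ^ card (UNIV::'a set)
        * gweight q (subtree g C s - {s}) (override_on id g (subtree g C s - {s})))"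
proof -
  let ?B = "subtree g C s"
  let ?t = "override_on id g (?B - {s})"
  have gC: "g \<in> Cgraphs C" and big: "\<beta> * max_gweight qh C \<le> gweight qh C g"
    using g by (simp_all add: Gbeta_def)
  have B: "?B \<noteq> UNIV" using \<open>s \<in> C\<close> \<open>C \<noteq> UNIV\<close> by (rule subtree_neq_UNIV)
  obtain a where a: "a \<in> Cgraphs ?B" "gweight q ?B a = max_gweight q ?B"
    using max_gweight_attained[OF B] by blast
  have "0 < \<beta> * max_gweight qh C" using \<beta>(1) max_gweight_close_pos[OF assms(1)] by simp
  then have pos: "0 < gweight qh C g" using big by linarith
  have "\<beta> * ((1 - \<beta>) ^ card (UNIV::'a set) * max_gweight q ?B) \<le> \<beta> * gweight qh ?B a"
    using gweight_close_max_lower[OF B a] \<beta>(1) by (intro mult_left_mono) simp_all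
  also have "\<dots> \<le> qh s (g s) * gweight qh (?B - {s}) ?t"
    using gweight_subtree_exchange[where p = qh, OF gC \<open>s \<in> C\<close> a(1) _ _ pos big] \<beta>(1)
      transition_matrix_nonneg[OF tmh] by (simp add: gweight_subtree)
  also have "\<dots> \<le> qh s (g s) * ((1 + \<beta>) ^ card (UNIV::'a set) * gweight q (?B - {s}) ?t)"
    using upstream transition_matrix_nonneg[OF tmh]
    by (intro mult_left_mono gweight_close_upper) simp_all
  finally show ?thesis .
qed

text \<open>A small edge at \<open>s\<close> would force \<open>\<beta> (1 - \<beta>)^N \<le> \<epsilon> K (1 + \<beta>)^N\<close>, contradicting
  \<open>small\<close>.\<close>

lemma Gbeta_close_edge_step:
  assumes "C \<noteq> UNIV" and g: "g \<in> Gbeta \<beta> qh C" and "s \<in> C"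
    and upstream: "\<forall>x\<in>subtree g C s - {s}. \<epsilon> * zeta q \<mu> \<le> \<mu> x * qh x (g x)"
  shows "\<epsilon> * zeta q \<mu> \<le> \<mu> s * qh s (g s)"
proof (rule ccontr)
  let ?N = "card (UNIV::'a set)"
  let ?K = "real (tree_const ?N)"
  let ?B = "subtree g C s"
  let ?pt = "gweight q (?B - {s}) (override_on id g (?B - {s}))"
  let ?M = "max_gweight q ?B"
  let ?P = "?M * (\<mu> s * zeta q \<mu>)"
  have gC: "g \<in> Cgraphs C" using g by (simp add: Gbeta_def)
  have "C \<noteq> {}" using \<open>s \<in> C\<close> by blast
  have zeta: "0 < zeta q \<mu>" by (rule zeta_pos[OF tm irr st \<open>C \<noteq> {}\<close> \<open>C \<noteq> UNIV\<close>])
  have P: "0 < ?P"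
    using max_gweight_pos[OF irr subtree_neq_UNIV[OF assms(3,1)]] stationary_pos[OF tm irr st] zeta
    by simp
  assume "\<not> \<epsilon> * zeta q \<mu> \<le> \<mu> s * qh s (g s)"
  then have small_edge: "\<mu> s * qh s (g s) \<le> \<epsilon> * zeta q \<mu>" by simp
  have "(\<beta> * (1 - \<beta>) ^ ?N) * ?P = (\<beta> * ((1 - \<beta>) ^ ?N * ?M)) * (\<mu> s * zeta q \<mu>)"
    by (simp only: ac_simps)
  also have "\<dots> \<le> (qh s (g s) * ((1 + \<beta>) ^ ?N * ?pt)) * (\<mu> s * zeta q \<mu>)"
    using gweight_close_subtree_le[OF assms] zeta stationary_pos[OF tm irr st, of s]
    by (intro mult_right_mono) simp_all
  also have "\<dots> = (\<mu> s * qh s (g s)) * ((1 + \<beta>) ^ ?N * (zeta q \<mu> * ?pt))"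
    by (simp only: ac_simps)
  also have "\<dots> \<le> (\<epsilon> * zeta q \<mu>) * ((1 + \<beta>) ^ ?N * (?K * ?M * \<mu> s))"
    using zeta \<epsilon> \<beta>(1) gweight_nonneg[of q, OF transition_matrix_nonneg[OF tm]]
      zeta_mult_subtree_le[OF tm irr st gC \<open>s \<in> C\<close> \<open>C \<noteq> UNIV\<close>]
    by (intro mult_mono[OF small_edge mult_left_mono]) simp_all
  also have "\<dots> = (\<epsilon> * ?K * (1 + \<beta>) ^ ?N) * ?P" by (simp only: ac_simps)
  finally show False using mult_strict_right_mono[OF small P] by linarith
qed

lemma Gbeta_close_edge_large:
  assumes "C \<noteq> UNIV" and g: "g \<in> Gbeta \<beta> qh C" and "s \<in> C"
  shows "\<epsilon> * zeta q \<mu> \<le> \<mu> s * qh s (g s)"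
proof -
  have "g \<in> Cgraphs C" using g by (simp add: Gbeta_def)
  then have "wf ((graph_edges g C)\<^sup>+)"
    by (intro wf_trancl finite_acyclic_wf) (simp_all add: Cgraphs_iff)
  then show ?thesis using \<open>s \<in> C\<close>
  proof (induction s rule: wf_induct_rule)
    case (less s)
    have "\<epsilon> * zeta q \<mu> \<le> \<mu> x * qh x (g x)" if "x \<in> subtree g C s - {s}" for x
      using less.IH[OF subtree_trancl[OF that]] subtree_subset[OF less.prems, of g] that by blast
    then show ?case using Gbeta_close_edge_step[OF assms(1) g less.prems] by blast
  qed
qed

end

theorem lemma3:
  fixes q qh :: "'a::finite \<Rightarrow> 'a \<Rightarrow> real" and \<mu> :: "'a \<Rightarrow> real"
    and \<beta> \<epsilon> :: real and C :: "'a set" and s :: 'a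
  assumes "card (UNIV::'a set) \<ge> 2"
    and "0 < \<beta>" "\<beta> < 1 / 2 ^ (card (UNIV::'a set))"
    and "0 < \<epsilon>"
    and "\<epsilon> < \<beta> * (1 - \<beta>) / (real (L_const (card (UNIV::'a set))) * real (card (UNIV::'a set)) ^ 4)"
    and "transition_matrix q" "irreducible q" "stationary q \<mu>"
    and "transition_matrix qh" "close \<epsilon> \<beta> q \<mu> qh"
    and "C \<noteq> {}" "C \<noteq> UNIV" "s \<in> C"
  shows "(\<forall>g\<in>Gbeta \<beta> q C. \<mu> s * q s (g s) \<ge> \<epsilon> * zeta q \<mu>)
       \<and> (\<forall>g\<in>Gbeta \<beta> qh C. \<mu> s * qh s (g s) \<ge> \<epsilon> * zeta q \<mu>)"
proof -
  let ?N = "card (UNIV::'a set)"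
  have small: "\<epsilon> * tree_const ?N * (1 + \<beta>) ^ ?N < \<beta> * (1 - \<beta>) ^ ?N"
    using assms(1-5) by (rule close_constants)
  have "1 / 2 ^ ?N \<le> (1::real)" by simp
  then have "\<beta> < 1" using assms(3) by linarith
  note setting = assms(6-10,1-2) \<open>\<beta> < 1\<close> assms(4) small
  show ?thesis
    using Gbeta_edge_large[OF setting assms(12) _ assms(13)]
      Gbeta_close_edge_large[OF setting assms(12) _ assms(13)]
    by blast
qed

end
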